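(* For every $\alpha\ge 1$ and $\beta\ge 1$, there exist a finite set $\mathcal{N}$ of $n$ agents, a finite set $\mathcal{M}$ of feasible centers, a positive integer $k$, and a pseudometric $d$ on $\mathcal{N}\cup\mathcal{M}$ such that no clustering is simultaneously in the $\alpha$-core with respect to the centroid loss $\ell_i(C,x)=d(i,x)$ and in the $\beta$-core with respect to the non-centroid loss $\ell_i(C,x)=\max_{j\in C}d(i,j)$.
   Context: Given agents $\mathcal{N}$ ($|\mathcal{N}|=n$), feasible centers $\mathcal{M}$, a positive integer $k$, and loss functions $\ell_i(C,x)\ge0$ defined for $C\subseteq\mathcal{N}$ with $i\in C$ and $x\in\mathcal{M}$: a clustering is $\mathcal{X}=\{(C_1,x_1),\dots,(C_k,x_k)\}$ where $C_1,\dots,C_k$ are pairwise disjoint subsets of $\mathcal{N}$ (some possibly empty) with union $\mathcal{N}$ and $x_t\in\mathcal{M}$; $\ell_i(\mathcal{X})=\ell_i(C_t,x_t)$ for the unique $t$ with $i\in C_t$. For $\alpha\ge1$, $\mathcal{X}$ is in the $\alpha$-core (with respect to the losses $\ell_i$) if there is no $S\subseteq\mathcal{N}$ with $|S|\ge n/k$ and $y\in\mathcal{M}$ such that $\alpha\cdot\ell_i(S,y)<\ell_i(\mathcal{X})$ for all $i\in S$. A pseudometric satisfies $d(x,x)=0$, symmetry and the triangle inequality. *)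

theory Defs
  imports Main "HOL.Real"
begin

text \<open>Agents and feasible centers are both represented as natural numbers (points of
  the space N \<union> M); a loss function maps an agent i, a coalition C and a center x
  to a nonnegative real.\<close>

definition pseudometric_on :: "nat set \<Rightarrow> (nat \<Rightarrow> nat \<Rightarrow> real) \<Rightarrow> bool" where
  "pseudometric_on P d \<longleftrightarrow>
     (\<forall>x\<in>P. d x x = 0) \<and>
     (\<forall>x\<in>P. \<forall>y\<in>P. d x y = d y x) \<and>
     (\<forall>x\<in>P. \<forall>y\<in>P. \<forall>z\<in>P. d x z \<le> d x y + d y z)"

definition is_clustering ::
  "nat set \<Rightarrow> nat set \<Rightarrow> nat \<Rightarrow> (nat \<Rightarrow> nat set) \<Rightarrow> (nat \<Rightarrow> nat) \<Rightarrow> bool" where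
  "is_clustering N M k C x \<longleftrightarrow>
     (\<forall>s<k. \<forall>t<k. s \<noteq> t \<longrightarrow> C s \<inter> C t = {}) \<and>
     (\<Union>t<k. C t) = N \<and>
     (\<forall>t<k. x t \<in> M)"

definition clustering_loss ::
  "(nat \<Rightarrow> nat set \<Rightarrow> nat \<Rightarrow> real) \<Rightarrow> nat \<Rightarrow> (nat \<Rightarrow> nat set) \<Rightarrow> (nat \<Rightarrow> nat) \<Rightarrow> nat \<Rightarrow> real" where
  "clustering_loss l k C x i = (let t = (THE t. t < k \<and> i \<in> C t) in l i (C t) (x t))"

definition in_core ::
  "(nat \<Rightarrow> nat set \<Rightarrow> nat \<Rightarrow> real) \<Rightarrow> nat set \<Rightarrow> nat set \<Rightarrow> nat \<Rightarrow> real
   \<Rightarrow> (nat \<Rightarrow> nat set) \<Rightarrow> (nat \<Rightarrow> nat) \<Rightarrow> bool" where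
  "in_core l N M k \<alpha> C x \<longleftrightarrow>
     \<not> (\<exists>S y. S \<subseteq> N \<and> real (card S) \<ge> real (card N) / real k \<and> y \<in> M \<and>
            (\<forall>i\<in>S. \<alpha> * l i S y < clustering_loss l k C x i))"

definition centroid_loss :: "(nat \<Rightarrow> nat \<Rightarrow> real) \<Rightarrow> nat \<Rightarrow> nat set \<Rightarrow> nat \<Rightarrow> real" where
  "centroid_loss d i C x = d i x"

definition noncentroid_loss :: "(nat \<Rightarrow> nat \<Rightarrow> real) \<Rightarrow> nat \<Rightarrow> nat set \<Rightarrow> nat \<Rightarrow> real" where
  "noncentroid_loss d i C x = Max ((\<lambda>j. d i j) ` C)"

end

theory Submission
  imports Defs
begin

text \<open>Take K > max(\<alpha>, \<beta>) and six agents in two gadgets {0,1,2} and {3,4,5}: inside a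
  gadget the twins 3g, 3g+1 are at distance 1 and the outlier 3g+2 is at distance K from
  both; agents of different gadgets are at distance K^2. The centers are the four twins and
  k = 3, so every pair of agents may deviate.

  In the non-centroid \<beta>-core, each pair of twins has a member whose cluster lies inside
  the pair; hence the two outliers share the third cluster, and no twin joins them, since it
  would block together with an outlier. In the centroid \<alpha>-core, a twin that is not its
  own center blocks together with the outlier of its gadget unless that outlier is served
  by a center of its own gadget. The common cluster of the two outliers cannot have its
  center in both gadgets.\<close>

definition cluster_index :: "nat \<Rightarrow> (nat \<Rightarrow> nat set) \<Rightarrow> nat \<Rightarrow> nat" where
  "cluster_index k C i = (THE t. t < k \<and> i \<in> C t)"

lemma clustering_loss_cluster_index:
  "clustering_loss l k C x i = l i (C (cluster_index k C i)) (x (cluster_index k C i))"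
  by (simp add: clustering_loss_def cluster_index_def Let_def)

lemma is_clustering_cluster_index_eq:
  assumes "is_clustering N M k C x" "t < k" "i \<in> C t"
  shows "cluster_index k C i = t"
  unfolding cluster_index_def
  using assms by (intro the_equality) (auto simp: is_clustering_def)

lemma is_clustering_cluster_index:
  assumes "is_clustering N M k C x" "i \<in> N"
  shows "cluster_index k C i < k" "i \<in> C (cluster_index k C i)"
proof -
  obtain t where "t < k" "i \<in> C t"
    using assms unfolding is_clustering_def by blast
  then show "cluster_index k C i < k" "i \<in> C (cluster_index k C i)"
    using is_clustering_cluster_index_eq[OF assms(1)] by simp_all
qed

lemma is_clustering_subset: "is_clustering N M k C x \<Longrightarrow> t < k \<Longrightarrow> C t \<subseteq> N"
  unfolding is_clustering_def by blast

lemma pseudometric_on_nonneg: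
  assumes "pseudometric_on P d" "a \<in> P" "b \<in> P"
  shows "0 \<le> d a b"
proof -
  have "d a a \<le> d a b + d b a" "d a a = 0" "d b a = d a b"
    using assms unfolding pseudometric_on_def by blast+
  then show ?thesis by linarith
qed

lemma in_core_blocking_pair:
  assumes core: "in_core l N M k \<alpha> C x" and card: "card N \<le> 2 * k"
    and "i \<in> N" "j \<in> N" "i \<noteq> j" "y \<in> M"
  shows "clustering_loss l k C x i \<le> \<alpha> * l i {i, j} y \<or>
         clustering_loss l k C x j \<le> \<alpha> * l j {i, j} y"
proof -
  have "real (card N) / real k \<le> real (card {i, j})"
    using card \<open>i \<noteq> j\<close> by (cases "k = 0") (simp_all add: field_simps)
  moreover have "{i, j} \<subseteq> N" using assms(3,4) by blast
  ultimately show ?thesis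
    using core \<open>y \<in> M\<close> unfolding in_core_def not_less[symmetric] by blast
qed

lemma centroid_core_pair:
  assumes "in_core (centroid_loss d) N M k \<alpha> C x" "card N \<le> 2 * k"
    and "i \<in> N" "j \<in> N" "i \<noteq> j" "y \<in> M"
  shows "d i (x (cluster_index k C i)) \<le> \<alpha> * d i y \<or>
         d j (x (cluster_index k C j)) \<le> \<alpha> * d j y"
  using in_core_blocking_pair[OF assms]
  by (simp add: clustering_loss_cluster_index centroid_loss_def)

lemma noncentroid_loss_pair:
  assumes "pseudometric_on P d" "i \<in> P" "j \<in> P"
  shows "noncentroid_loss d i {i, j} y = d i j"
proof -
  have "d i i = 0" "0 \<le> d i j"
    using assms pseudometric_on_nonneg[OF assms(1)] unfolding pseudometric_on_def by blast+
  then show ?thesis by (simp add: noncentroid_loss_def max_def)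
qed

lemma noncentroid_clustering_loss_ge:
  assumes cl: "is_clustering N M k C x" and "finite N" "i \<in> N"
    and "j \<in> C (cluster_index k C i)"
  shows "d i j \<le> clustering_loss (noncentroid_loss d) k C x i"
proof -
  have "finite (C (cluster_index k C i))"
    using is_clustering_subset[OF cl is_clustering_cluster_index(1)[OF cl \<open>i \<in> N\<close>]]
      \<open>finite N\<close> by (rule finite_subset)
  then show ?thesis
    using assms(4) by (simp add: clustering_loss_cluster_index noncentroid_loss_def)
qed

lemma noncentroid_core_pair:
  assumes core: "in_core (noncentroid_loss d) N M k \<beta> C x" and cl: "is_clustering N M k C x"
    and "finite N" "card N \<le> 2 * k" "M \<noteq> {}" and pm: "pseudometric_on (N \<union> M) d"
    and "i \<in> N" "j \<in> N" "i \<noteq> j"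
  obtains r where "r \<in> {i, j}" "\<forall>m\<in>C (cluster_index k C r). d r m \<le> \<beta> * d i j"
proof -
  obtain y where "y \<in> M" using \<open>M \<noteq> {}\<close> by blast
  have "noncentroid_loss d i {i, j} y = d i j" "noncentroid_loss d j {i, j} y = d i j"
    using noncentroid_loss_pair[OF pm, of i j] noncentroid_loss_pair[OF pm, of j i]
      \<open>i \<in> N\<close> \<open>j \<in> N\<close> pm by (auto simp: pseudometric_on_def insert_commute)
  then obtain r where "r \<in> {i, j}" "clustering_loss (noncentroid_loss d) k C x r \<le> \<beta> * d i j"
    using in_core_blocking_pair[OF core \<open>card N \<le> 2 * k\<close> \<open>i \<in> N\<close> \<open>j \<in> N\<close> \<open>i \<noteq> j\<close> \<open>y \<in> M\<close>]
    by auto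
  moreover have "r \<in> N" using \<open>r \<in> {i, j}\<close> \<open>i \<in> N\<close> \<open>j \<in> N\<close> by blast
  ultimately show ?thesis
    using that noncentroid_clustering_loss_ge[OF cl \<open>finite N\<close>, of r _ d] by force
qed

definition gadget_dist :: "real \<Rightarrow> nat \<Rightarrow> nat \<Rightarrow> real" where
  "gadget_dist K i j =
     (if i = j then 0 else if i div 3 \<noteq> j div 3 then K\<^sup>2
      else if i mod 3 = 2 \<or> j mod 3 = 2 then K else 1)"

lemma pseudometric_on_gadget_dist:
  assumes "1 \<le> K"
  shows "pseudometric_on P (gadget_dist K)"
proof -
  have "K \<le> K\<^sup>2" using assms by (simp add: power2_eq_square mult_le_cancel_left1)
  moreover from this have "1 \<le> K\<^sup>2" using assms by linarith
  ultimately have "gadget_dist K a c \<le> gadget_dist K a b + gadget_dist K b c" for a b c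
    using assms unfolding gadget_dist_def by (simp split: if_splits)
  then show ?thesis
    unfolding pseudometric_on_def by (auto simp: gadget_dist_def)
qed

lemma less_3_eq_third:
  fixes a b c d :: nat
  shows "a < 3 \<Longrightarrow> b < 3 \<Longrightarrow> c < 3 \<Longrightarrow> d < 3 \<Longrightarrow> a \<noteq> b \<Longrightarrow> c \<notin> {a, b} \<Longrightarrow> d \<notin> {a, b}
    \<Longrightarrow> d = c"
  unfolding insert_iff empty_iff by presburger

lemma gadget_twin_neighbours:
  assumes "1 < K" "(p, q) \<in> {(0, 1), (3, 4)}" "r \<in> {p, q}" "m < 6" "gadget_dist K r m < K"
  shows "m \<in> {p, q}"
proof -
  have "K < K\<^sup>2" using assms by (simp add: power2_eq_square)
  moreover have "m \<in> {0, 1, 2, 3, 4, 5}" using assms by auto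
  ultimately show ?thesis using assms by (auto simp: gadget_dist_def)
qed

context
  fixes K :: real and C :: "nat \<Rightarrow> nat set" and x :: "nat \<Rightarrow> nat"
  assumes K_gt_1: "1 < K" and clustering: "is_clustering {..<6} {0, 1, 3, 4} 3 C x"
begin

lemma gadget_cluster_index:
  assumes "i < 6"
  shows "cluster_index 3 C i < 3" "i \<in> C (cluster_index 3 C i)"
  using is_clustering_cluster_index[OF clustering] assms by auto

lemma gadget_cluster_members: "r < 6 \<Longrightarrow> m \<in> C (cluster_index 3 C r) \<Longrightarrow> m < 6"
  using is_clustering_subset[OF clustering] gadget_cluster_index by blast

context
  fixes \<beta> :: real
  assumes \<beta>_less: "\<beta> < K"
    and noncentroid_core: "in_core (noncentroid_loss (gadget_dist K)) {..<6} {0, 1, 3, 4} 3 \<beta> C x"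
begin

lemma gadget_noncentroid_pair:
  assumes "i < 6" "j < 6" "i \<noteq> j"
  shows "\<exists>r\<in>{i, j}. \<forall>m\<in>C (cluster_index 3 C r). gadget_dist K r m \<le> \<beta> * gadget_dist K i j"
proof -
  have "card {..<6::nat} \<le> 2 * 3" "{0, 1, 3, 4::nat} \<noteq> {}"
    "pseudometric_on ({..<6} \<union> {0, 1, 3, 4}) (gadget_dist K)"
    using pseudometric_on_gadget_dist K_gt_1 by simp_all
  from noncentroid_core_pair[OF noncentroid_core clustering finite_lessThan this] assms
  show ?thesis by (metis lessThan_iff)
qed

lemma gadget_noncentroid_twin_cluster:
  assumes pq: "(p, q) \<in> {(0, 1), (3, 4)}"
  obtains r where "r \<in> {p, q}" "C (cluster_index 3 C r) \<subseteq> {p, q}"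
proof -
  have "p < 6" "q < 6" "p \<noteq> q" "gadget_dist K p q = 1"
    using pq by (auto simp: gadget_dist_def)
  then obtain r where r: "r \<in> {p, q}" "\<forall>m\<in>C (cluster_index 3 C r). gadget_dist K r m \<le> \<beta>"
    using gadget_noncentroid_pair[of p q] by auto
  have "m \<in> {p, q}" if "m \<in> C (cluster_index 3 C r)" for m
  proof (rule gadget_twin_neighbours[OF K_gt_1 pq r(1)])
    show "m < 6" using gadget_cluster_members r(1) \<open>p < 6\<close> \<open>q < 6\<close> that by blast
    show "gadget_dist K r m < K" using r(2) that \<beta>_less by force
  qed
  then show ?thesis using that r(1) by blast
qed

lemma gadget_noncentroid_outliers_together: "cluster_index 3 C 2 = cluster_index 3 C 5"
proof -
  let ?T = "cluster_index 3 C"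
  obtain a where a: "a \<in> {0, 1}" "C (?T a) \<subseteq> {0, 1}"
    using gadget_noncentroid_twin_cluster[of 0 1] by auto
  obtain b where b: "b \<in> {3, 4}" "C (?T b) \<subseteq> {3, 4}"
    using gadget_noncentroid_twin_cluster[of 3 4] by auto
  have "a < 6" "b < 6" using a b by auto
  have "a \<notin> C (?T b)" using a(1) b(2) by auto
  then have "?T a \<noteq> ?T b" using gadget_cluster_index(2)[OF \<open>a < 6\<close>] by metis
  moreover have "?T i \<notin> {?T a, ?T b}" if "i \<in> {2, 5}" for i
    using gadget_cluster_index(2)[of i] that a(2) b(2) by auto
  ultimately show ?thesis
    using less_3_eq_third[OF gadget_cluster_index(1)[OF \<open>a < 6\<close>] gadget_cluster_index(1)[OF \<open>b < 6\<close>]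
        gadget_cluster_index(1)[of 2] gadget_cluster_index(1)[of 5]]
    by simp
qed

lemma gadget_noncentroid_twin_apart:
  assumes i: "i \<in> {0, 1, 3, 4}"
  shows "cluster_index 3 C i \<noteq> cluster_index 3 C 2"
proof
  let ?T = "cluster_index 3 C"
  assume same: "?T i = ?T 2"
  define u :: nat where "u = (if i < 3 then 2 else 5)"
  have u: "u \<in> {2, 5}" "gadget_dist K i u = K"
    using i unfolding u_def by (auto simp: gadget_dist_def)
  then obtain r where r: "r \<in> {i, u}" "\<forall>m\<in>C (?T r). gadget_dist K r m \<le> \<beta> * K"
    using gadget_noncentroid_pair[of i u] i by force
  have "r \<in> {0, 1, 2, 3, 4, 5}" using r(1) u(1) i by auto
  define f :: nat where "f = (if r < 3 then 5 else 2)"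
  have f: "f \<in> {2, 5}" "gadget_dist K r f = K\<^sup>2"
    using \<open>r \<in> {0, 1, 2, 3, 4, 5}\<close> unfolding f_def by (auto simp: gadget_dist_def)
  have "?T r = ?T 2"
    using r(1) u(1) same gadget_noncentroid_outliers_together by auto
  then have "f \<in> C (?T r)"
    using f(1) gadget_cluster_index(2)[of 2] gadget_cluster_index(2)[of 5]
      gadget_noncentroid_outliers_together by auto
  then have "K\<^sup>2 \<le> \<beta> * K" using r(2) f(2) by force
  moreover have "\<beta> * K < K\<^sup>2"
    using \<beta>_less K_gt_1 by (simp add: power2_eq_square)
  ultimately show False by simp
qed

lemma gadget_noncentroid_twins_together:
  assumes pq: "(p, q) \<in> {(0, 1), (3, 4)}"
  shows "cluster_index 3 C p = cluster_index 3 C q"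
proof -
  let ?T = "cluster_index 3 C"
  obtain a where a: "a \<in> {p, q}" "C (?T a) \<subseteq> {p, q}"
    using gadget_noncentroid_twin_cluster[OF pq] .
  define b :: nat where "b = (if p = 0 then 3 else 0)"
  have b: "(b, b + 1) \<in> {(0, 1), (3, 4)}" "b \<notin> {p, q}" "b + 1 \<notin> {p, q}"
    using pq unfolding b_def by auto
  obtain c where c: "c \<in> {b, b + 1}" "C (?T c) \<subseteq> {b, b + 1}"
    using gadget_noncentroid_twin_cluster[OF b(1)] .
  have "a < 6" "c < 6" "a \<in> {0, 1, 3, 4}"
    using pq a(1) b(1) c(1) by auto
  have "?T i = ?T a" if "i \<in> {p, q}" for i
  proof (rule less_3_eq_third[OF gadget_cluster_index(1)[OF \<open>c < 6\<close>] gadget_cluster_index(1)[of 2]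
        gadget_cluster_index(1)[OF \<open>a < 6\<close>] gadget_cluster_index(1)[of i]])
    have "i \<notin> C (?T c)" "a \<notin> C (?T c)" "2 \<notin> C (?T c)"
      using that a(1) b c(2) pq by auto
    then show "?T c \<noteq> ?T 2" "?T a \<notin> {?T c, ?T 2}" "?T i \<notin> {?T c, ?T 2}"
      using gadget_cluster_index(2)[of 2] gadget_cluster_index(2)[OF \<open>a < 6\<close>]
        gadget_cluster_index(2)[of i] gadget_noncentroid_twin_apart[OF \<open>a \<in> {0, 1, 3, 4}\<close>]
        gadget_noncentroid_twin_apart[of i] that pq
      by auto
  qed (use that pq in auto)
  then show ?thesis by simp
qed

end

context
  fixes \<alpha> :: real
  assumes \<alpha>_less: "\<alpha> < K"
    and centroid_core: "in_core (centroid_loss (gadget_dist K)) {..<6} {0, 1, 3, 4} 3 \<alpha> C x"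
begin

lemma gadget_centroid_outlier_center:
  assumes pqs: "(p, q, s) \<in> {(0, 1, 2), (3, 4, 5)}"
    and twins: "cluster_index 3 C p = cluster_index 3 C q"
  shows "x (cluster_index 3 C s) \<in> {p, q}"
proof -
  let ?T = "cluster_index 3 C"
  have "p \<noteq> q" using pqs by auto
  then obtain u where u: "u \<in> {p, q}" "x (?T u) \<noteq> u"
    using twins by (metis insertCI)
  have "0 < gadget_dist K u (x (?T u))"
    using u(2) K_gt_1 by (simp add: gadget_dist_def)
  moreover have "gadget_dist K u u = 0" "gadget_dist K s u = K"
    using u(1) pqs by (auto simp: gadget_dist_def)
  moreover have "u < 6" "s < 6" "u \<noteq> s" "u \<in> {0, 1, 3, 4}"
    using u(1) pqs by auto
  ultimately have "gadget_dist K s (x (?T s)) \<le> \<alpha> * K"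
    using centroid_core_pair[OF centroid_core, of u s u] by simp
  moreover have "\<alpha> * K < K\<^sup>2"
    using \<alpha>_less K_gt_1 by (simp add: power2_eq_square)
  moreover have "x (?T s) \<in> {0, 1, 3, 4}"
    using clustering gadget_cluster_index(1)[of s] pqs unfolding is_clustering_def by auto
  ultimately show ?thesis
    using pqs by (auto simp: gadget_dist_def)
qed

end

lemma gadget_not_in_both_cores:
  assumes "\<alpha> < K" "\<beta> < K"
    and "in_core (centroid_loss (gadget_dist K)) {..<6} {0, 1, 3, 4} 3 \<alpha> C x"
    and "in_core (noncentroid_loss (gadget_dist K)) {..<6} {0, 1, 3, 4} 3 \<beta> C x"
  shows False
proof -
  note twins_together = gadget_noncentroid_twins_together[OF assms(2,4)]
  have "x (cluster_index 3 C 2) \<in> {0, 1}" "x (cluster_index 3 C 5) \<in> {3, 4}"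
    using gadget_centroid_outlier_center[OF assms(1,3)] twins_together by auto
  then show False
    using gadget_noncentroid_outliers_together[OF assms(2,4)] by auto
qed

end

theorem mainTheorem2:
  fixes \<alpha> \<beta> :: real
  assumes "\<alpha> \<ge> 1" and "\<beta> \<ge> 1"
  shows "\<exists>(N::nat set) (M::nat set) (k::nat) (d::nat \<Rightarrow> nat \<Rightarrow> real).
           finite N \<and> N \<noteq> {} \<and> finite M \<and> M \<noteq> {} \<and> k > 0 \<and>
           pseudometric_on (N \<union> M) d \<and>
           \<not> (\<exists>C x. is_clustering N M k C x \<and>
                    in_core (centroid_loss d) N M k \<alpha> C x \<and>
                    in_core (noncentroid_loss d) N M k \<beta> C x)"
proof -
  define K where "K = \<alpha> + \<beta>"
  have "1 < K" "\<alpha> < K" "\<beta> < K" using assms unfolding K_def by linarith+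
  then have "\<not> (\<exists>C x. is_clustering {..<6} {0, 1, 3, 4} 3 C x \<and>
      in_core (centroid_loss (gadget_dist K)) {..<6} {0, 1, 3, 4} 3 \<alpha> C x \<and>
      in_core (noncentroid_loss (gadget_dist K)) {..<6} {0, 1, 3, 4} 3 \<beta> C x)"
    using gadget_not_in_both_cores by blast
  moreover have "pseudometric_on ({..<6} \<union> {0, 1, 3, 4}) (gadget_dist K)"
    using pseudometric_on_gadget_dist \<open>1 < K\<close> by simp
  moreover have "finite {..<6::nat}" "{..<6::nat} \<noteq> {}" "finite {0, 1, 3, 4::nat}"
    "{0, 1, 3, 4::nat} \<noteq> {}" "0 < (3::nat)"
    by (simp_all add: lessThan_empty_iff)
  ultimately show ?thesis by blast
qed

end
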